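(* Let $n\ge1$, $D\ge1$, $T\ge1$ be integers and let $f\in\mathbb{Q}[x_1,\dots,x_n]$ be a polynomial of total degree at most $D$ with $t\le T$ terms. If $N$ is an integer with $$N>\frac{T(T-1)}{2}\log_2\big[(D+1)^n-1\big]-\frac14T^2+\frac12T,$$ then among any $N$ distinct odd primes $p_1,\dots,p_N$ at least one is a good prime for $f$.
   Context: $\mathbf{mod}(m,p)$ denotes the least nonnegative residue of the integer $m$ modulo $p$. For a prime $p$, let $f_{x,p}(x):=f\big(x,x^{\mathbf{mod}(D+1,p)},x^{\mathbf{mod}((D+1)^2,p)},\dots,x^{\mathbf{mod}((D+1)^{n-1},p)}\big)\in\mathbb{Q}[x]$, i.e. the substitution $x_i=x^{\mathbf{mod}((D+1)^{i-1},p)}$ for $i=1,\dots,n$. The prime $p$ is a good prime for $f$ if this substitution maps the distinct monomials of $f$ to pairwise distinct monomials in $x$, i.e. for any two distinct exponent vectors $(e_1,\dots,e_n)\neq(e'_1,\dots,e'_n)$ of monomials occurring in $f$, $\sum_{i=1}^n e_i\,\mathbf{mod}((D+1)^{i-1},p)\neq\sum_{i=1}^n e'_i\,\mathbf{mod}((D+1)^{i-1},p)$ (equivalently, $f_{x,p}$ has the same number of terms as $f$). *)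

theory Defs
  imports Complex_Main "HOL-Library.Poly_Mapping" "HOL-Computational_Algebra.Primes"
begin

text \<open>A polynomial in Q[x_1,...,x_n] is represented as a finitely supported map from
  exponent vectors (nat =>0 nat, variable x_(i+1) has index i) to rational coefficients,
  as in the AFP's Polynomials entry.\<close>

type_synonym mpoly_rat = "(nat \<Rightarrow>\<^sub>0 nat) \<Rightarrow>\<^sub>0 rat"

definition in_vars :: "nat \<Rightarrow> mpoly_rat \<Rightarrow> bool" where
  "in_vars n f \<longleftrightarrow> (\<forall>m\<in>Poly_Mapping.keys (f::mpoly_rat). Poly_Mapping.keys m \<subseteq> {..<n})"

definition total_deg_le :: "mpoly_rat \<Rightarrow> nat \<Rightarrow> bool" where
  "total_deg_le f D \<longleftrightarrow> (\<forall>m\<in>Poly_Mapping.keys (f::mpoly_rat). (\<Sum>i\<in>Poly_Mapping.keys m. Poly_Mapping.lookup m i) \<le> D)"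

definition num_terms :: "mpoly_rat \<Rightarrow> nat" where
  "num_terms f = card (Poly_Mapping.keys f)"

text \<open>Exponent of x in the image of the monomial m under x_(i+1) := x^(mod((D+1)^i, p)).\<close>
definition subst_exp :: "nat \<Rightarrow> nat \<Rightarrow> nat \<Rightarrow> (nat \<Rightarrow>\<^sub>0 nat) \<Rightarrow> nat" where
  "subst_exp n D p m = (\<Sum>i<n. Poly_Mapping.lookup m i * ((D + 1) ^ i mod p))"

definition good_prime :: "nat \<Rightarrow> nat \<Rightarrow> mpoly_rat \<Rightarrow> nat \<Rightarrow> bool" where
  "good_prime n D f p \<longleftrightarrow> inj_on (subst_exp n D p) (Poly_Mapping.keys f)"

end

theory Submission imports Defs begin

text \<open>Map a monomial to its Kronecker exponent \<open>K m = \<Sum>\<^sub>i m\<^sub>i (D+1)\<^sup>i\<close>. Exponents are at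
  most \<open>D\<close>, so these are base-\<open>D+1\<close> digit expansions: \<open>K\<close> is injective on the monomials of \<open>f\<close>
  with values in \<open>[0, (D+1)\<^sup>n - 1]\<close>, and the substituted exponent is congruent to \<open>K\<close> modulo \<open>p\<close>.
  Hence a bad prime divides one of the at most \<open>T(T-1)/2\<close> positive differences of Kronecker
  exponents, so the product of \<open>N\<close> bad odd primes satisfies
  \<open>3\<^sup>N \<le> ((D+1)\<^sup>n - 1)\<^bsup>T(T-1)/2\<^esup>\<close>. Since \<open>log\<^sub>3 x \<le> log\<^sub>2 x - 1/2\<close> for \<open>x \<ge> 3\<close>, this contradicts
  the lower bound on \<open>N\<close>.\<close>

lemma prod_primes_dvd:
  fixes P :: "nat set"
  assumes "finite P" "\<forall>p\<in>P. prime p \<and> p dvd x"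
  shows "\<Prod>P dvd x"
  using assms
proof (induction P rule: finite_induct)
  case empty
  then show ?case by simp
next
  case (insert p P)
  have p: "prime p" "p dvd x" using insert.prems by auto
  have "coprime p q" if "q \<in> P" for q
    using that insert.hyps(2) insert.prems p(1) by (auto intro: primes_coprime)
  then have "coprime p (\<Prod>P)" by (rule prod_coprime_right)
  then show ?case using insert p by (simp add: divides_mult)
qed

lemma three_le_odd_prime: "prime (p :: nat) \<Longrightarrow> odd p \<Longrightarrow> 3 \<le> p"
  using prime_ge_2_nat[of p] by (cases "p = 2") auto

lemma three_pow_card_le_prod_odd_primes:
  fixes P :: "nat set"
  assumes "finite P" "\<forall>p\<in>P. prime p \<and> odd p"
  shows "3 ^ card P \<le> \<Prod>P"
proof -
  have "3 ^ card P = (\<Prod>p\<in>P. 3 :: nat)" by simp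
  also have "\<dots> \<le> \<Prod>P" using assms(2) three_le_odd_prime by (intro prod_mono) auto
  finally show ?thesis .
qed

lemma prod_primes_le_pow_choose_two:
  fixes A P :: "nat set"
  assumes "finite A" "A \<subseteq> {..B}" "finite P"
    and "\<forall>p\<in>P. prime p \<and> (\<exists>a\<in>A. \<exists>b\<in>A. a < b \<and> p dvd b - a)"
  shows "\<Prod>P \<le> B ^ (card A choose 2)"
proof -
  define pairs where "pairs = {S. S \<subseteq> A \<and> card S = 2}"
  define X where "X = (\<Prod>S\<in>pairs. Max S - Min S)"
  have pair: "\<exists>a b. S = {a, b} \<and> a \<in> A \<and> b \<in> A \<and> a < b" if "S \<in> pairs" for S
  proof -
    have "S \<subseteq> A" "card S = 2" using that unfolding pairs_def by auto
    then obtain x y where S: "S = {x, y}" "x \<noteq> y" "x \<in> A" "y \<in> A"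
      by (auto simp: card_2_iff)
    show ?thesis
    proof (cases "x < y")
      case True
      with S show ?thesis by blast
    next
      case False
      with S show ?thesis by (intro exI[of _ y] exI[of _ x]) auto
    qed
  qed
  have finite_pairs: "finite pairs" unfolding pairs_def using assms(1) by simp
  have "X > 0"
    unfolding X_def using finite_pairs by (intro prod_pos) (auto dest!: pair)
  moreover have "\<Prod>P dvd X"
  proof (rule prod_primes_dvd[OF assms(3)], intro ballI conjI)
    fix p assume "p \<in> P"
    then show "prime p" using assms(4) by blast
    obtain a b where ab: "a \<in> A" "b \<in> A" "a < b" "p dvd b - a"
      using assms(4) \<open>p \<in> P\<close> by blast
    then have "{a, b} \<in> pairs" by (auto simp: pairs_def)
    moreover have "Max {a, b} - Min {a, b} = b - a" using ab(3) by simp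
    ultimately have "b - a dvd X"
      unfolding X_def using dvd_prodI[OF finite_pairs, of "{a, b}" "\<lambda>S. Max S - Min S"] by simp
    then show "p dvd X" using ab(4) by (rule dvd_trans[rotated])
  qed
  ultimately have "\<Prod>P \<le> X" by (rule dvd_imp_le[rotated])
  also have "X \<le> (\<Prod>S\<in>pairs. B)"
    unfolding X_def using assms(2) by (intro prod_mono) (auto dest!: pair)
  also have "\<dots> = B ^ (card A choose 2)"
    using n_subsets[OF assms(1)] by (simp add: pairs_def)
  finally show ?thesis .
qed

definition kronecker_exp :: "nat \<Rightarrow> nat \<Rightarrow> (nat \<Rightarrow>\<^sub>0 nat) \<Rightarrow> nat" where
  "kronecker_exp n D m = (\<Sum>i<n. Poly_Mapping.lookup m i * (D + 1) ^ i)"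

lemma sum_digits_eq_imp_eq:
  fixes b :: nat
  assumes "\<forall>i<n. f i < b" "\<forall>i<n. g i < b"
    and "(\<Sum>i<n. f i * b ^ i) = (\<Sum>i<n. g i * b ^ i)"
  shows "\<forall>i<n. f i = g i"
  using assms
proof (induction n arbitrary: f g)
  case 0
  then show ?case by simp
next
  case (Suc n)
  have split: "(\<Sum>i<Suc n. h i * b ^ i) = h 0 + b * (\<Sum>i<n. h (Suc i) * b ^ i)"
    for h :: "nat \<Rightarrow> nat"
  proof -
    have "(\<Sum>i<Suc n. h i * b ^ i) = h 0 * b ^ 0 + (\<Sum>i<n. h (Suc i) * b ^ Suc i)"
      by (rule sum.lessThan_Suc_shift)
    also have "(\<Sum>i<n. h (Suc i) * b ^ Suc i) = b * (\<Sum>i<n. h (Suc i) * b ^ i)"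
      by (simp add: sum_distrib_left mult.left_commute)
    finally show ?thesis by simp
  qed
  have eq: "f 0 + b * (\<Sum>i<n. f (Suc i) * b ^ i) = g 0 + b * (\<Sum>i<n. g (Suc i) * b ^ i)"
    using Suc.prems(3) by (simp only: split)
  have "f 0 < b" "g 0 < b" using Suc.prems(1,2) by auto
  have "f 0 = (f 0 + b * (\<Sum>i<n. f (Suc i) * b ^ i)) mod b" using \<open>f 0 < b\<close> by simp
  also have "\<dots> = g 0" using eq \<open>g 0 < b\<close> by simp
  finally have head: "f 0 = g 0" .
  have "\<forall>i<n. f (Suc i) < b" "\<forall>i<n. g (Suc i) < b" using Suc.prems(1,2) by simp_all
  moreover have "(\<Sum>i<n. f (Suc i) * b ^ i) = (\<Sum>i<n. g (Suc i) * b ^ i)"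
    using eq head \<open>f 0 < b\<close> by simp
  ultimately have "\<forall>i<n. f (Suc i) = g (Suc i)" by (rule Suc.IH)
  with head show ?case by (metis less_Suc_eq_0_disj)
qed

lemma sum_max_digits: "(\<Sum>i<n. D * (D + 1 :: nat) ^ i) = (D + 1) ^ n - 1"
proof (induction n)
  case 0
  then show ?case by simp
next
  case (Suc n)
  have "(D + 1 :: nat) ^ n \<ge> 1" by simp
  with Suc show ?case by (simp add: algebra_simps)
qed

lemma lookup_le_total_deg:
  assumes "total_deg_le f D" "m \<in> Poly_Mapping.keys f"
  shows "Poly_Mapping.lookup m i \<le> D"
proof (cases "i \<in> Poly_Mapping.keys m")
  case True
  then have "Poly_Mapping.lookup m i \<le> (\<Sum>j\<in>Poly_Mapping.keys m. Poly_Mapping.lookup m j)"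
    by (intro member_le_sum) auto
  also have "\<dots> \<le> D" using assms unfolding total_deg_le_def by blast
  finally show ?thesis .
next
  case False
  then show ?thesis by (simp add: in_keys_iff)
qed

lemma inj_on_kronecker_exp:
  assumes "in_vars n f" "total_deg_le f D"
  shows "inj_on (kronecker_exp n D) (Poly_Mapping.keys f)"
proof (rule inj_onI)
  fix m m' assume m: "m \<in> Poly_Mapping.keys f" "m' \<in> Poly_Mapping.keys f"
    and "kronecker_exp n D m = kronecker_exp n D m'"
  then have low: "\<forall>i<n. Poly_Mapping.lookup m i = Poly_Mapping.lookup m' i"
    using lookup_le_total_deg[OF assms(2)] unfolding kronecker_exp_def
    by (intro sum_digits_eq_imp_eq) (auto simp: less_Suc_eq_le)
  have high: "Poly_Mapping.lookup m i = 0" "Poly_Mapping.lookup m' i = 0" if "n \<le> i" for i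
    using assms(1) m that unfolding in_vars_def by (metis in_keys_iff lessThan_iff not_le subsetD)+
  show "m = m'"
    by (rule poly_mapping_eqI) (metis low high not_le)
qed

lemma kronecker_exp_le:
  assumes "total_deg_le f D" "m \<in> Poly_Mapping.keys f"
  shows "kronecker_exp n D m \<le> (D + 1) ^ n - 1"
proof -
  have "kronecker_exp n D m \<le> (\<Sum>i<n. D * (D + 1) ^ i)"
    unfolding kronecker_exp_def
    by (intro sum_mono mult_right_mono lookup_le_total_deg[OF assms]) simp
  then show ?thesis by (simp only: sum_max_digits)
qed

lemma subst_exp_mod: "subst_exp n D p m mod p = kronecker_exp n D m mod p"
proof -
  have "subst_exp n D p m mod p
      = (\<Sum>i<n. Poly_Mapping.lookup m i * ((D + 1) ^ i mod p) mod p) mod p"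
    unfolding subst_exp_def by (rule mod_sum_eq[symmetric])
  also have "\<dots> = (\<Sum>i<n. Poly_Mapping.lookup m i * (D + 1) ^ i mod p) mod p"
    by (simp only: mod_mult_right_eq)
  also have "\<dots> = kronecker_exp n D m mod p"
    unfolding kronecker_exp_def by (rule mod_sum_eq)
  finally show ?thesis .
qed

lemma not_good_prime_dvd_kronecker_diff:
  assumes "in_vars n f" "total_deg_le f D" "\<not> good_prime n D f p"
  defines "A \<equiv> kronecker_exp n D ` Poly_Mapping.keys f"
  shows "\<exists>a\<in>A. \<exists>b\<in>A. a < b \<and> p dvd b - a"
proof -
  obtain m m' where m: "m \<in> Poly_Mapping.keys f" "m' \<in> Poly_Mapping.keys f" "m \<noteq> m'"
    and collide: "subst_exp n D p m = subst_exp n D p m'"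
    using assms(3) unfolding good_prime_def inj_on_def by blast
  define a b where "a = kronecker_exp n D m" and "b = kronecker_exp n D m'"
  have "a \<noteq> b" using inj_on_kronecker_exp[OF assms(1,2)] m unfolding a_def b_def inj_on_def by blast
  have "a mod p = b mod p" using collide by (metis subst_exp_mod a_def b_def)
  have "a \<in> A" "b \<in> A" using m by (auto simp: A_def a_def b_def)
  show ?thesis
  proof (cases "a < b")
    case True
    then have "p dvd b - a" using \<open>a mod p = b mod p\<close> mod_eq_dvd_iff_nat[of a b p] by simp
    with True show ?thesis using \<open>a \<in> A\<close> \<open>b \<in> A\<close> by blast
  next
    case False
    then have "b < a" using \<open>a \<noteq> b\<close> by simp
    then have "p dvd a - b" using \<open>a mod p = b mod p\<close> mod_eq_dvd_iff_nat[of b a p] by simp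
    with \<open>b < a\<close> show ?thesis using \<open>a \<in> A\<close> \<open>b \<in> A\<close> by blast
  qed
qed

lemma log3_le_log2_minus_half:
  fixes x :: real
  assumes "x \<ge> 3"
  shows "log 3 x \<le> log 2 x - 1 / 2"
proof -
  have "ln ((2 :: real) ^ 3) < ln (3 ^ 2)" by simp
  then have ln23: "3 * ln 2 < 2 * ln (3 :: real)"
    by (simp only: ln_realpow zero_less_numeral of_nat_numeral)
  have "ln 3 \<le> ln x" using assms by simp
  have "1 / 2 \<le> ln 3 * (1 / ln 2 - 1 / ln (3 :: real))"
    using ln23 by (simp add: field_simps)
  also have "\<dots> \<le> ln x * (1 / ln 2 - 1 / ln 3)"
    using \<open>ln 3 \<le> ln x\<close> ln23 by (intro mult_right_mono) (auto simp: field_simps)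
  finally show ?thesis by (simp add: log_def field_simps)
qed

lemma card_le_choose_two_log_bound:
  fixes N t T B :: nat
  assumes "3 ^ N \<le> B ^ (t choose 2)" "t \<le> T" "B \<ge> 3"
  shows "real N \<le> real (T * (T - 1)) / 2 * log 2 (real B) - real (T ^ 2) / 4 + real T / 2"
proof -
  define C where "C = real (T * (T - 1)) / 2"
  have "2 * (t choose 2) \<le> t * (t - 1)" unfolding choose_two by simp
  also have "\<dots> \<le> T * (T - 1)" using assms(2) by (intro mult_mono) auto
  finally have "real (2 * (t choose 2)) \<le> real (T * (T - 1))" by (rule of_nat_mono)
  then have k: "real (t choose 2) \<le> C" unfolding C_def by simp
  have "real N = log 3 (3 ^ N)" by (simp add: log_nat_power)
  also have "\<dots> \<le> log 3 (real B ^ (t choose 2))"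
    using assms(1,3) by (subst log_le_cancel_iff) (auto simp flip: of_nat_power)
  also have "\<dots> = real (t choose 2) * log 3 (real B)"
    using assms(3) by (simp add: log_nat_power)
  also have "\<dots> \<le> C * (log 2 (real B) - 1 / 2)"
    using k log3_le_log2_minus_half[of "real B"] assms(3)
    by (intro mult_mono) auto
  also have "\<dots> = C * log 2 (real B) - C / 2" by (simp add: algebra_simps)
  also have "\<dots> \<le> C * log 2 (real B) - real (T ^ 2) / 4 + real T / 2"
  proof -
    have "real (T ^ 2) / 4 - real T / 2 \<le> C / 2"
      unfolding C_def by (cases T) (simp_all add: power2_eq_square algebra_simps)
    then show ?thesis by linarith
  qed
  finally show ?thesis by (simp add: C_def)
qed

theorem theorem3p2:
  fixes n D T N :: nat and f :: mpoly_rat and P :: "nat set"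
  assumes "n \<ge> 1" "D \<ge> 1" "T \<ge> 1"
    and "in_vars n f" and "total_deg_le f D" and "num_terms f \<le> T"
    and "real N > real (T * (T - 1)) / 2 * log 2 (real ((D + 1) ^ n - 1))
                  - real (T ^ 2) / 4 + real T / 2"
    and "N \<ge> 1"
    and "finite P" and "card P = N" and "\<forall>p\<in>P. prime p \<and> odd p"
  shows "\<exists>p\<in>P. good_prime n D f p"
proof (rule ccontr)
  assume no_good: "\<not> ?thesis"
  define A where "A = kronecker_exp n D ` Poly_Mapping.keys f"
  define B where "B = (D + 1) ^ n - 1"
  have bad: "\<forall>p\<in>P. prime p \<and> (\<exists>a\<in>A. \<exists>b\<in>A. a < b \<and> p dvd b - a)"
    using no_good assms(11) not_good_prime_dvd_kronecker_diff[OF assms(4,5)]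
    unfolding A_def by blast
  have A_bounded: "A \<subseteq> {..B}" using kronecker_exp_le[OF assms(5)] by (auto simp: A_def B_def)
  have card_A: "card A \<le> T"
    using card_image[OF inj_on_kronecker_exp[OF assms(4,5)]] assms(6)
    by (simp add: A_def num_terms_def)
  \<comment> \<open>\<open>B \<ge> 3\<close> comes from a single bad odd prime.\<close>
  have "P \<noteq> {}" using assms(8,10) by auto
  then obtain p where "p \<in> P" by blast
  then obtain a b where ab: "a \<in> A" "b \<in> A" "a < b" "p dvd b - a" using bad by blast
  have "3 \<le> p" using assms(11) \<open>p \<in> P\<close> three_le_odd_prime by blast
  also have "p \<le> b - a" using ab by (intro dvd_imp_le) auto
  also have "\<dots> \<le> B" using ab A_bounded by auto
  finally have "3 \<le> B" .
  have "3 ^ N \<le> \<Prod>P" using three_pow_card_le_prod_odd_primes[OF assms(9,11)] assms(10) by simp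
  also have "\<dots> \<le> B ^ (card A choose 2)"
    using prod_primes_le_pow_choose_two[OF _ A_bounded assms(9) bad] by (simp add: A_def)
  finally have "real N \<le> real (T * (T - 1)) / 2 * log 2 (real B) - real (T ^ 2) / 4 + real T / 2"
    by (rule card_le_choose_two_log_bound[OF _ card_A \<open>3 \<le> B\<close>])
  with assms(7) show False unfolding B_def by linarith
qed

end
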